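(* Let $f(x)=x^5+px^4+qx^3+rx^2+sx+t$ with real coefficients and let $D$, $L_1$, $L_2$, $L_3$ be as in the context. Then $f$ has a quintuple root (i.e. $f(x)=(x-a)^5$ for some $a$) if and only if $D=0$, $L_1=0$, $L_2=0$ and $L_3=0$.
   Context: Let $\alpha_1,\dots,\alpha_5\in\mathbb{C}$ be the roots of $f$ listed with multiplicity. $D=\prod_{1\le i<j\le 5}(\alpha_i-\alpha_j)^2$ is the discriminant of $f$. $L_3=2p^2-5q$. $L_2=40qs-16p^2s-8rp^3+38rpq+3p^2q^2-12q^3-45r^2$. $L_1=-264ps^2r-12p^3tq^2+36r^3pq-124srpq^2+28srp^3q+260sptq-132p^2qrt+240pr^2t+234sqr^2+32p^4tr+48ptq^3-56sp^3t-80q^2rt+194qs^2p^2-600str-6q^3sp^2+2p^2q^2r^2-12sr^2p^2-54r^4+320s^3-8q^3r^2-8r^3p^3+250qt^2-176q^2s^2+24q^4s-36p^4s^2-100p^2t^2$. *)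

theory Defs
  imports Complex_Main
begin

definition quintic :: "'a::comm_ring_1 \<Rightarrow> 'a \<Rightarrow> 'a \<Rightarrow> 'a \<Rightarrow> 'a \<Rightarrow> 'a \<Rightarrow> 'a" where
  "quintic p q r s t x = x^5 + p*x^4 + q*x^3 + r*x^2 + s*x + t"

definition discr5 :: "(nat \<Rightarrow> complex) \<Rightarrow> complex" where
  "discr5 \<alpha> = (\<Prod>j<5. \<Prod>i<j. (\<alpha> i - \<alpha> j)^2)"

definition L3 :: "real \<Rightarrow> real \<Rightarrow> real" where
  "L3 p q = 2*p^2 - 5*q"

definition L2 :: "real \<Rightarrow> real \<Rightarrow> real \<Rightarrow> real \<Rightarrow> real" where
  "L2 p q r s = 40*q*s - 16*p^2*s - 8*r*p^3 + 38*r*p*q + 3*p^2*q^2 - 12*q^3 - 45*r^2"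

definition L1 :: "real \<Rightarrow> real \<Rightarrow> real \<Rightarrow> real \<Rightarrow> real \<Rightarrow> real" where
  "L1 p q r s t = -264*p*s^2*r - 12*p^3*t*q^2 + 36*r^3*p*q - 124*s*r*p*q^2 + 28*s*r*p^3*q
    + 260*s*p*t*q - 132*p^2*q*r*t + 240*p*r^2*t + 234*s*q*r^2 + 32*p^4*t*r + 48*p*t*q^3
    - 56*s*p^3*t - 80*q^2*r*t + 194*q*s^2*p^2 - 600*s*t*r - 6*q^3*s*p^2 + 2*p^2*q^2*r^2
    - 12*s*r^2*p^2 - 54*r^4 + 320*s^3 - 8*q^3*r^2 - 8*r^3*p^3 + 250*q*t^2 - 176*q^2*s^2
    + 24*q^4*s - 36*p^4*s^2 - 100*p^2*t^2"

end

theory Submission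
  imports Defs
begin

text \<open>Write f in terms of a = -p/5. The conditions L3 = 0, L2 = 0, L1 = 0 successively force
q, r, s to be the coefficients of (x - a)^5: once the earlier ones hold, L2 and L1 become -45 times
a square and 320 times a cube of the defect of the next coefficient. Then f = (x - a)^5 + c, and a
vanishing discriminant gives a double root, where f' = 5 (x - a)^4 vanishes as well; this places
the root at a and forces c = 0.\<close>

lemma quintic_shifted_pure_power:
  "quintic (-(5*a)) (10*a^2) (-(10*a^3)) (5*a^4) t x = (x - a)^5 + (t + a^5)"
  unfolding quintic_def by (simp add: algebra_simps power_def numeral_eq_Suc)

lemma quintic_eq_fifth_power_imp_coeffs:
  fixes p q r s t a :: real
  assumes "\<And>x. quintic p q r s t x = (x - a)^5"
  shows "p = -(5*a) \<and> q = 10*a^2 \<and> r = -(10*a^3) \<and> s = 5*a^4 \<and> t = -(a^5)"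
proof -
  have "t = -(a^5)" using assms[of 0] by (simp add: quintic_def)
  moreover have "1 + p + q + r + s + t = (1 - a)^5" using assms[of 1] by (simp add: quintic_def)
  moreover have "-1 + p - q + r - s + t = (-1 - a)^5" using assms[of "-1"] by (simp add: quintic_def)
  moreover have "32 + 16*p + 8*q + 4*r + 2*s + t = (2 - a)^5" using assms[of 2] by (simp add: quintic_def)
  moreover have "-32 + 16*p - 8*q + 4*r - 2*s + t = (-2 - a)^5" using assms[of "-2"] by (simp add: quintic_def)
  ultimately show ?thesis by (simp add: power_def algebra_simps numeral_eq_Suc)
qed

lemma L_conditions_iff:
  "L3 p q = 0 \<and> L2 p q r s = 0 \<and> L1 p q r s t = 0 \<longleftrightarrow>
   (\<exists>a. p = -(5*a) \<and> q = 10*a^2 \<and> r = -(10*a^3) \<and> s = 5*a^4)"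
proof
  assume L: "L3 p q = 0 \<and> L2 p q r s = 0 \<and> L1 p q r s t = 0"
  then have hq: "q = 2*p^2/5" unfolding L3_def by simp
  have "L2 p q r s = -45 * (r - 2*p^3/25)^2"
    unfolding L2_def hq by (simp add: algebra_simps power_def numeral_eq_Suc)
  with L have hr: "r = 2*p^3/25" by simp
  have "L1 p q r s t = 320 * (s - p^4/125)^3"
    unfolding L1_def hq hr by (simp add: field_simps power_def numeral_eq_Suc)
  with L have "s = p^4/125" by simp
  with hq hr show "\<exists>a. p = -(5*a) \<and> q = 10*a^2 \<and> r = -(10*a^3) \<and> s = 5*a^4"
    by (intro exI[of _ "-p/5"]) (simp add: power_divide)
next
  assume "\<exists>a. p = -(5*a) \<and> q = 10*a^2 \<and> r = -(10*a^3) \<and> s = 5*a^4"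
  then obtain a where "p = -(5*a)" "q = 10*a^2" "r = -(10*a^3)" "s = 5*a^4" by blast
  then show "L3 p q = 0 \<and> L2 p q r s = 0 \<and> L1 p q r s t = 0"
    unfolding L1_def L2_def L3_def by (simp add: algebra_simps power_def numeral_eq_Suc)
qed

lemma discr5_eq_0_iff: "discr5 \<alpha> = 0 \<longleftrightarrow> (\<exists>j<5. \<exists>i<j. \<alpha> i = \<alpha> j)"
  unfolding discr5_def by auto

lemma prod_linear_factors_repeated:
  fixes \<alpha> :: "nat \<Rightarrow> 'a::comm_ring_1"
  assumes "i < j" "j < n" "\<alpha> i = \<alpha> j"
  shows "(\<Prod>k<n. (x - \<alpha> k)) = (x - \<alpha> i)^2 * (\<Prod>k\<in>{..<n}-{i}-{j}. (x - \<alpha> k))"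
proof -
  have "(\<Prod>k<n. (x - \<alpha> k)) = (x - \<alpha> i) * (\<Prod>k\<in>{..<n}-{i}. (x - \<alpha> k))"
    using assms by (subst prod.remove[of _ i]) auto
  also have "(\<Prod>k\<in>{..<n}-{i}. (x - \<alpha> k)) = (x - \<alpha> j) * (\<Prod>k\<in>{..<n}-{i}-{j}. (x - \<alpha> k))"
    using assms by (subst prod.remove[of _ j]) auto
  finally show ?thesis using assms by (simp add: power2_eq_square)
qed

lemma prod_linear_factors_eq_power_imp_roots:
  fixes \<alpha> :: "nat \<Rightarrow> 'a::idom"
  assumes "\<And>x. (\<Prod>i<n. (x - \<alpha> i)) = (x - a)^n" "k < n"
  shows "\<alpha> k = a"
proof -
  have "(\<Prod>i<n. (\<alpha> k - \<alpha> i)) = 0" using assms(2) by (intro prod_zero) auto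
  then show ?thesis using assms(1)[of "\<alpha> k"] by simp
qed

lemma has_field_derivative_at_double_root:
  fixes F H :: "'a::real_normed_field \<Rightarrow> 'a"
  assumes "\<And>x. F x = (x - b)^2 * H x" "(H has_field_derivative H') (at b)"
  shows "(F has_field_derivative 0) (at b)"
proof -
  have "F = (\<lambda>x. (x - b)^2 * H x)" using assms(1) by auto
  with assms(2) show ?thesis by (auto intro!: derivative_eq_intros)
qed

lemma pure_power_double_root_imp_zero:
  fixes u c b :: "'a::real_normed_field" and H :: "'a \<Rightarrow> 'a"
  assumes "\<And>x. (x - u)^n + c = (x - b)^2 * H x" "(H has_field_derivative H') (at b)" "n > 0"
  shows "c = 0"
proof -
  have "((\<lambda>x. (x - u)^n + c) has_field_derivative 0) (at b)"
    by (rule has_field_derivative_at_double_root[OF assms(1,2)])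
  moreover have "((\<lambda>x. (x - u)^n + c) has_field_derivative of_nat n * (b - u)^(n - 1)) (at b)"
    by (auto intro!: derivative_eq_intros)
  ultimately have "of_nat n * (b - u)^(n - 1) = 0" using DERIV_unique by blast
  with \<open>n > 0\<close> have "b = u" by simp
  with assms(1)[of b] \<open>n > 0\<close> show ?thesis by (simp add: zero_power)
qed

lemma fifth_power_imp_discr5_and_L_conditions:
  fixes p q r s t a :: real and \<alpha> :: "nat \<Rightarrow> complex"
  assumes roots: "\<And>x. quintic (of_real p) (of_real q) (of_real r) (of_real s) (of_real t) x
                     = (\<Prod>i<5. (x - \<alpha> i))"
    and fifth_power: "\<And>x. quintic p q r s t x = (x - a)^5"
  shows "discr5 \<alpha> = 0 \<and> L1 p q r s t = 0 \<and> L2 p q r s = 0 \<and> L3 p q = 0"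
proof -
  have coeffs: "p = -(5*a) \<and> q = 10*a^2 \<and> r = -(10*a^3) \<and> s = 5*a^4 \<and> t = -(a^5)"
    using fifth_power by (rule quintic_eq_fifth_power_imp_coeffs)
  then have "\<And>x. (\<Prod>i<5. (x - \<alpha> i)) = (x - of_real a)^5"
    using roots quintic_shifted_pure_power[of "of_real a :: complex"] by simp
  then have "\<alpha> k = of_real a" if "k < 5" for k
    using that by (rule prod_linear_factors_eq_power_imp_roots)
  then have "\<alpha> 0 = \<alpha> 1" by simp
  then have "discr5 \<alpha> = 0" unfolding discr5_eq_0_iff by (intro exI[of _ 1]) auto
  moreover have "L3 p q = 0 \<and> L2 p q r s = 0 \<and> L1 p q r s t = 0"
    unfolding L_conditions_iff using coeffs by blast
  ultimately show ?thesis by simp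
qed

lemma discr5_and_L_conditions_imp_fifth_power:
  fixes p q r s t :: real and \<alpha> :: "nat \<Rightarrow> complex"
  assumes roots: "\<And>x. quintic (of_real p) (of_real q) (of_real r) (of_real s) (of_real t) x
                     = (\<Prod>i<5. (x - \<alpha> i))"
    and "discr5 \<alpha> = 0" "L1 p q r s t = 0" "L2 p q r s = 0" "L3 p q = 0"
  shows "\<exists>a. \<forall>x. quintic p q r s t x = (x - a)^5"
proof -
  obtain a where coeffs: "p = -(5*a)" "q = 10*a^2" "r = -(10*a^3)" "s = 5*a^4"
    using assms(3-5) L_conditions_iff by blast
  obtain i j where ij: "i < j" "j < 5" "\<alpha> i = \<alpha> j" using assms(2) discr5_eq_0_iff by blast
  have "(x - of_real a)^5 + of_real (t + a^5) = (x - \<alpha> i)^2 * (\<Prod>k\<in>{..<5}-{i}-{j}. (x - \<alpha> k))"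
    for x :: complex
  proof -
    have "(x - of_real a)^5 + of_real (t + a^5)
        = quintic (of_real p) (of_real q) (of_real r) (of_real s) (of_real t) x"
      using quintic_shifted_pure_power[of "of_real a" "of_real t" x] unfolding coeffs by simp
    also have "\<dots> = (\<Prod>k<5. (x - \<alpha> k))" by (rule roots)
    also have "\<dots> = (x - \<alpha> i)^2 * (\<Prod>k\<in>{..<5}-{i}-{j}. (x - \<alpha> k))"
      by (rule prod_linear_factors_repeated[OF ij])
    finally show ?thesis .
  qed
  then have "complex_of_real (t + a^5) = 0"
    by (rule pure_power_double_root_imp_zero)
      (auto intro: has_field_derivative_prod intro!: derivative_eq_intros)
  then have "t + a^5 = 0" by (simp only: of_real_eq_0_iff)
  then show ?thesis
    using quintic_shifted_pure_power[of a t] unfolding coeffs by (intro exI[of _ a]) simp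
qed

theorem mainTheorem5:
  fixes p q r s t :: real and \<alpha> :: "nat \<Rightarrow> complex"
  assumes roots: "\<And>x::complex. quintic (of_real p) (of_real q) (of_real r) (of_real s) (of_real t) x
                     = (\<Prod>i<5. (x - \<alpha> i))"
  shows "(\<exists>a::real. \<forall>x::real. quintic p q r s t x = (x - a)^5) \<longleftrightarrow>
         (discr5 \<alpha> = 0 \<and> L1 p q r s t = 0 \<and> L2 p q r s = 0 \<and> L3 p q = 0)"
proof
  assume "\<exists>a::real. \<forall>x::real. quintic p q r s t x = (x - a)^5"
  then obtain a where "\<And>x. quintic p q r s t x = (x - a)^5" by blast
  with roots show "discr5 \<alpha> = 0 \<and> L1 p q r s t = 0 \<and> L2 p q r s = 0 \<and> L3 p q = 0"
    by (rule fifth_power_imp_discr5_and_L_conditions)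
next
  assume "discr5 \<alpha> = 0 \<and> L1 p q r s t = 0 \<and> L2 p q r s = 0 \<and> L3 p q = 0"
  with roots show "\<exists>a::real. \<forall>x::real. quintic p q r s t x = (x - a)^5"
    using discr5_and_L_conditions_imp_fifth_power by blast
qed

end
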